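(* Assume $\rho_i,\beta_i$ are continuous on $[0,\bar b_i]$ for all $i\in\mathcal{I}$. Let $\lambda^*$ be a minimizer of $Q$ over $\mathbb{R}^{|\mathcal{K}|}$ with $Q(\lambda^* )$ finite, and suppose that for every $i\in\mathcal{I}$ the set $\mathcal{V}_i := \{v_i(x_i,b_i) : (x_i,b_i)\in S_i^*(\lambda^* )\}\subseteq\mathbb{R}^{|\mathcal{K}|}$ is convex. Then there exists $(\mathbf{x}^*,\mathbf{b}^* )\in\mathcal{S}$ with $(x_i^*,b_i^* )\in S_i^*(\lambda^* )$ for all $i$ (so $(\mathbf{x}^*,\mathbf{b}^* )$ attains the supremum defining $Q(\lambda^* )$) such that $F(\mathbf{x}^*,\mathbf{b}^* ) = Q(\lambda^* )$.
   Context: Setting. $\mathcal{I}$, $\mathcal{K}$ finite, $\mathcal{E}\subseteq\mathcal{I}\times\mathcal{K}$, $\mathcal{K}_i := \{k:(i,k)\in\mathcal{E}\}$, $\mathcal{I}_k := \{i:(i,k)\in\mathcal{E}\}$; $s_i>0$, $r_{ik}\ge 0$, $\bar b_i>0$; $\rho_i:[0,\bar b_i]\to[0,1]$, $\beta_i:[0,\bar b_i]\to\mathbb{R}$ nondecreasing with $\beta_i(b)\le b$. $h_i(z,b) := (z-\beta_i(b))\rho_i(b)$. For each $i$, $S_i := \{(x_i,b_i)\in\mathbb{R}^{|\mathcal{K}_i|}\times\mathbb{R}^{|\mathcal{K}_i|} : b_i\in[0,\bar b_i]^{|\mathcal{K}_i|},\ \sum_{k\in\mathcal{K}_i}x_{ik}\le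 1,\ x_i\ge 0\}$ and $\mathcal{S}=\prod_i S_i$. $v_i(x_i,b_i)\in\mathbb{R}^{|\mathcal{K}|}$ has $k$-th coordinate $r_{ik}s_ix_{ik}\rho_i(b_{ik})$ if $k\in\mathcal{K}_i$ and $0$ otherwise; $v(\mathbf{x},\mathbf{b}) = \sum_i v_i(x_i,b_i)$. $\pi(\mathbf{x},\mathbf{b}) := \sum_{(i,k)\in\mathcal{E}} h_i(r_{ik},b_{ik})s_ix_{ik}$. $\psi_i(\lambda) := \max_{(x_i,b_i)\in S_i}\sum_{k\in\mathcal{K}_i} h_i(r_{ik}(1-\lambda_k),b_{ik})s_ix_{ik}$, with $S_i^*(\lambda)$ its set of maximizers. $u:\mathbb{R}^{|\mathcal{K}|}\to\mathbb{R}\cup\{-\infty\}$ concave, $p(\lambda):=\sup_v\{\lambda^Tv+u(v)\}$. Dual function $Q(\lambda) := \sup_{(\mathbf{x},\mathbf{b})\in\mathcal{S}}(\pi(\mathbf{x},\mathbf{b})-\lambda^Tv(\mathbf{x},\mathbf{b})) + p(\lambda)$. Primal objective $F(\mathbf{x},\mathbf{b}) := \pi(\mathbf{x},\mathbf{b}) + \inf_{\lambda\in\mathbb{R}^{|\mathcal{K}|}}\{p(\lambda)-\lambda^Tv(\mathbf{x},\mathbf{b})\}$. *)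

theory Defs
  imports "HOL-Analysis.Analysis"
begin

text \<open>Index sets are finite types 'i (for I) and 'k (for K).  A point (x_i,b_i) of R^{|K_i|} x R^{|K_i|} is represented by a pair of
functions 'k \<Rightarrow> real whose coordinates outside K_i are fixed to 0.\<close>

definition Kset :: "('i \<times> 'k) set \<Rightarrow> 'i \<Rightarrow> 'k set" where
  "Kset E i = {k. (i, k) \<in> E}"

definition hfun :: "('i \<Rightarrow> real \<Rightarrow> real) \<Rightarrow> ('i \<Rightarrow> real \<Rightarrow> real) \<Rightarrow> 'i \<Rightarrow> real \<Rightarrow> real \<Rightarrow> real" where
  "hfun rho beta i z b = (z - beta i b) * rho i b"

definition Sset :: "('i \<times> 'k) set \<Rightarrow> ('i \<Rightarrow> real) \<Rightarrow> 'i \<Rightarrow> (('k \<Rightarrow> real) \<times> ('k \<Rightarrow> real)) set" where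
  "Sset E bbar i = {(x, b).
      (\<forall>k. k \<notin> Kset E i \<longrightarrow> x k = 0 \<and> b k = 0) \<and>
      (\<forall>k\<in>Kset E i. 0 \<le> b k \<and> b k \<le> bbar i \<and> 0 \<le> x k) \<and>
      (\<Sum>k\<in>Kset E i. x k) \<le> 1}"

definition psi_obj :: "('i \<times> 'k::finite) set \<Rightarrow> ('i \<Rightarrow> real) \<Rightarrow> ('i \<Rightarrow> 'k \<Rightarrow> real) \<Rightarrow>
    ('i \<Rightarrow> real \<Rightarrow> real) \<Rightarrow> ('i \<Rightarrow> real \<Rightarrow> real) \<Rightarrow> 'i \<Rightarrow> real ^ 'k \<Rightarrow>
    ('k \<Rightarrow> real) \<times> ('k \<Rightarrow> real) \<Rightarrow> real" where
  "psi_obj E s r rho beta i lam z =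
     (\<Sum>k\<in>Kset E i. hfun rho beta i (r i k * (1 - lam $ k)) (snd z k) * s i * fst z k)"

definition Sstar :: "('i \<times> 'k::finite) set \<Rightarrow> ('i \<Rightarrow> real) \<Rightarrow> ('i \<Rightarrow> 'k \<Rightarrow> real) \<Rightarrow>
    ('i \<Rightarrow> real \<Rightarrow> real) \<Rightarrow> ('i \<Rightarrow> real \<Rightarrow> real) \<Rightarrow> ('i \<Rightarrow> real) \<Rightarrow> 'i \<Rightarrow> real ^ 'k \<Rightarrow>
    (('k \<Rightarrow> real) \<times> ('k \<Rightarrow> real)) set" where
  "Sstar E s r rho beta bbar i lam =
     {z \<in> Sset E bbar i. \<forall>z'\<in>Sset E bbar i.
        psi_obj E s r rho beta i lam z' \<le> psi_obj E s r rho beta i lam z}"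

definition vi :: "('i \<times> 'k::finite) set \<Rightarrow> ('i \<Rightarrow> real) \<Rightarrow> ('i \<Rightarrow> 'k \<Rightarrow> real) \<Rightarrow>
    ('i \<Rightarrow> real \<Rightarrow> real) \<Rightarrow> 'i \<Rightarrow> ('k \<Rightarrow> real) \<times> ('k \<Rightarrow> real) \<Rightarrow> real ^ 'k" where
  "vi E s r rho i z = (\<chi> k. if k \<in> Kset E i then r i k * s i * fst z k * rho i (snd z k) else 0)"

definition vtot :: "('i::finite \<times> 'k) set \<Rightarrow> ('i \<Rightarrow> real) \<Rightarrow> ('i \<Rightarrow> 'k \<Rightarrow> real) \<Rightarrow>
    ('i \<Rightarrow> real \<Rightarrow> real) \<Rightarrow> ('i \<Rightarrow> 'k \<Rightarrow> real) \<Rightarrow> ('i \<Rightarrow> 'k \<Rightarrow> real) \<Rightarrow> real ^ 'k" where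
  "vtot E s r rho x b = (\<Sum>i\<in>UNIV. vi E s r rho i (x i, b i))"

definition pi_obj :: "('i \<times> 'k) set \<Rightarrow> ('i \<Rightarrow> real) \<Rightarrow> ('i \<Rightarrow> 'k \<Rightarrow> real) \<Rightarrow>
    ('i \<Rightarrow> real \<Rightarrow> real) \<Rightarrow> ('i \<Rightarrow> real \<Rightarrow> real) \<Rightarrow>
    ('i \<Rightarrow> 'k \<Rightarrow> real) \<Rightarrow> ('i \<Rightarrow> 'k \<Rightarrow> real) \<Rightarrow> real" where
  "pi_obj E s r rho beta x b =
     (\<Sum>(i, k)\<in>E. hfun rho beta i (r i k) (b i k) * s i * x i k)"

definition Sall :: "('i \<times> 'k) set \<Rightarrow> ('i \<Rightarrow> real) \<Rightarrow>
    (('i \<Rightarrow> 'k \<Rightarrow> real) \<times> ('i \<Rightarrow> 'k \<Rightarrow> real)) set" where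
  "Sall E bbar = {(x, b). \<forall>i. (x i, b i) \<in> Sset E bbar i}"

definition dotp :: "real ^ 'k::finite \<Rightarrow> real ^ 'k \<Rightarrow> real" where
  "dotp lam v = lam \<bullet> v"

definition concave_ext :: "((real ^ 'k::finite) \<Rightarrow> ereal) \<Rightarrow> bool" where
  "concave_ext u \<longleftrightarrow> convex {(v, t::real). ereal t \<le> u v}"

definition pconj :: "((real ^ 'k::finite) \<Rightarrow> ereal) \<Rightarrow> real ^ 'k \<Rightarrow> ereal" where
  "pconj u lam = (SUP v. ereal (dotp lam v) + u v)"

definition Qdual :: "('i::finite \<times> 'k::finite) set \<Rightarrow> ('i \<Rightarrow> real) \<Rightarrow> ('i \<Rightarrow> 'k \<Rightarrow> real) \<Rightarrow>
    ('i \<Rightarrow> real \<Rightarrow> real) \<Rightarrow> ('i \<Rightarrow> real \<Rightarrow> real) \<Rightarrow> ('i \<Rightarrow> real) \<Rightarrow>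
    ((real ^ 'k) \<Rightarrow> ereal) \<Rightarrow> real ^ 'k \<Rightarrow> ereal" where
  "Qdual E s r rho beta bbar u lam =
     (SUP z\<in>Sall E bbar. ereal (pi_obj E s r rho beta (fst z) (snd z)
                                  - dotp lam (vtot E s r rho (fst z) (snd z))))
     + pconj u lam"

definition Fprimal :: "('i::finite \<times> 'k::finite) set \<Rightarrow> ('i \<Rightarrow> real) \<Rightarrow> ('i \<Rightarrow> 'k \<Rightarrow> real) \<Rightarrow>
    ('i \<Rightarrow> real \<Rightarrow> real) \<Rightarrow> ('i \<Rightarrow> real \<Rightarrow> real) \<Rightarrow>
    ((real ^ 'k) \<Rightarrow> ereal) \<Rightarrow> ('i \<Rightarrow> 'k \<Rightarrow> real) \<Rightarrow> ('i \<Rightarrow> 'k \<Rightarrow> real) \<Rightarrow> ereal" where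
  "Fprimal E s r rho beta u x b =
     ereal (pi_obj E s r rho beta x b)
     + (INF lam. pconj u lam - ereal (dotp lam (vtot E s r rho x b)))"

end

theory Submission
  imports Defs
begin

text \<open>Write \<open>L(\<lambda>, z) = \<pi>(z) - \<lambda>\<^sup>T v(z)\<close>, so that \<open>Q = \<Psi> + p\<close> with \<open>\<Psi>(\<lambda>) = max\<^sub>z\<^sub>\<in>\<^sub>\<S> L(\<lambda>, z)\<close>
attained on the compact set \<open>\<S>\<close>. Since \<open>L\<close> is affine in \<open>\<lambda>\<close>, a Danskin-type argument turns the
minimality of \<open>Q\<close> at \<open>\<lambda>\<^sup>*\<close> into: whenever \<open>p(\<lambda>\<^sup>* + d) \<le> p(\<lambda>\<^sup>*) + t\<close>, some maximizer \<open>z\<close> of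
\<open>L(\<lambda>\<^sup>*, \<cdot>)\<close> has \<open>d\<^sup>T v(z) \<le> t\<close>. The values \<open>v(z)\<close> of these maximizers form the Minkowski sum of
the sets \<open>\<V>\<^sub>i\<close>, a compact convex set, and a separation argument produces a single \<open>w = v(z)\<close>
serving all pairs \<open>(d, t)\<close> at once, i.e. a subgradient of \<open>p\<close> at \<open>\<lambda>\<^sup>*\<close>. For this \<open>z\<close> the infimum
in \<open>F(z)\<close> is attained at \<open>\<lambda>\<^sup>*\<close>, whence \<open>F(z) = L(\<lambda>\<^sup>*, z) + p(\<lambda>\<^sup>*) = Q(\<lambda>\<^sup>*)\<close>.\<close>

lemma compact_Pi_UNIV:
  fixes S :: "'i \<Rightarrow> 'a::topological_space set"
  assumes "\<And>i. compact (S i)"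
  shows "compact (Pi UNIV S)"
proof -
  have "compactin (product_topology (\<lambda>_. euclidean) UNIV) (PiE UNIV S)"
    using assms by (simp add: compactin_PiE compactin_euclidean_iff)
  then show ?thesis
    by (simp add: compactin_euclidean_iff euclidean_product_topology PiE_UNIV_domain)
qed

lemma compact_if_closed_subset: "compact S \<Longrightarrow> closed T \<Longrightarrow> T \<subseteq> S \<Longrightarrow> compact T"
  by (metis compact_Int_closed inf.absorb_iff2)

text \<open>Danskin's argument: the points provided for \<open>t > 0\<close> lie in the compact set \<open>{h \<le> T}\<close>, and
their \<open>F\<close>-values tend to \<open>M\<close> as \<open>t \<down> 0\<close>.\<close>

lemma maximizer_with_bounded_direction:
  fixes F h :: "'a::t2_space \<Rightarrow> real"
  assumes K: "compact K" and F: "continuous_on K F" and h: "continuous_on K h"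
    and le_M: "\<And>x. x \<in> K \<Longrightarrow> F x \<le> M"
    and perturbed: "\<And>t. 0 < t \<Longrightarrow> t \<le> 1 \<Longrightarrow> \<exists>x\<in>K. M - t * T \<le> F x - t * h x"
  shows "\<exists>x\<in>K. F x = M \<and> h x \<le> T"
proof -
  define G where "G = {x \<in> K. h x \<le> T}"
  have "G \<subseteq> K" by (auto simp: G_def)
  have "closed G"
    unfolding G_def by (rule continuous_on_closed_Collect_le[OF h continuous_on_const compact_imp_closed[OF K]])
  have "compact G" using K \<open>closed G\<close> \<open>G \<subseteq> K\<close> by (rule compact_if_closed_subset)
  have "K \<noteq> {}" using perturbed[of 1] by auto
  then obtain m where m: "\<And>x. x \<in> K \<Longrightarrow> m \<le> h x"
    using continuous_attains_inf[OF K _ h] by blast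
  have near: "\<exists>x\<in>G. M - t * (T - m) \<le> F x" if t: "0 < t" "t \<le> 1" for t
  proof -
    obtain x where x: "x \<in> K" "M - t * T \<le> F x - t * h x"
      using perturbed[OF t] by blast
    then have "t * h x \<le> t * T" using le_M[OF x(1)] by linarith
    then have "x \<in> G" using t x(1) by (simp add: G_def)
    moreover have "t * m \<le> t * h x" using m[OF x(1)] t by simp
    ultimately show ?thesis using x(2) by (intro bexI[of _ x]) (auto simp: algebra_simps)
  qed
  have "G \<noteq> {}" using near[of 1] by auto
  then obtain y where y: "y \<in> G" and y_max: "\<And>x. x \<in> G \<Longrightarrow> F x \<le> F y"
    using continuous_attains_sup[OF \<open>compact G\<close> _ continuous_on_subset[OF F \<open>G \<subseteq> K\<close>]] by blast
  have "((\<lambda>t. M - t * (T - m)) \<longlongrightarrow> M - 0 * (T - m)) (at_right 0)"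
    by (intro tendsto_intros)
  moreover have "eventually (\<lambda>t. M - t * (T - m) \<le> F y) (at_right (0::real))"
    unfolding eventually_at_right_field
  proof (intro exI[of _ 1] conjI allI impI)
    fix t :: real assume "0 < t" "t < 1"
    with near[of t] y_max show "M - t * (T - m) \<le> F y" by fastforce
  qed simp
  ultimately have "M \<le> F y"
    by (intro tendsto_upperbound[of _ _ "at_right 0"]) auto
  then show ?thesis using y \<open>G \<subseteq> K\<close> le_M[of y] by (auto simp: G_def)
qed

lemma mem_closed_convex_if_lower_bounds:
  fixes V :: "'a::euclidean_space set"
  assumes "convex V" "closed V"
    and dominating: "\<And>d t. (\<forall>w\<in>V. t < inner d w) \<Longrightarrow> t \<le> inner d w0"
  shows "w0 \<in> V"
proof (rule ccontr)
  assume "w0 \<notin> V"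
  then obtain e c where e: "inner e w0 < c" "\<And>w. w \<in> V \<Longrightarrow> c < inner e w"
    using separating_hyperplane_closed_point[OF assms(1,2)] by blast
  have "(inner e w0 + c) / 2 \<le> inner e w0"
    using e by (intro dominating) fastforce
  with e(1) show False by simp
qed

text \<open>Minimax by separation: the pairs \<open>(d, t)\<close> for which no \<open>w \<in> V\<close> works form a convex set disjoint
from \<open>A\<close>; a separating hyperplane through the origin, normalized to \<open>(-w\<^sub>0, 1)\<close>, gives the common \<open>w\<^sub>0\<close>.\<close>

lemma common_dominating_point:
  fixes V :: "'a::euclidean_space set" and A :: "('a \<times> real) set"
  assumes "convex A" and "(0, 0) \<in> A"
    and V: "convex V" "compact V" "V \<noteq> {}"
    and dominated: "\<And>d t. (d, t) \<in> A \<Longrightarrow> \<exists>w\<in>V. inner d w \<le> t"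
  shows "\<exists>w\<in>V. \<forall>(d, t)\<in>A. inner d w \<le> t"
proof -
  define B where "B = (\<Inter>w\<in>V. {x :: 'a \<times> real. inner (- w, 1) x < 0})"
  have B_iff: "(d, t) \<in> B \<longleftrightarrow> (\<forall>w\<in>V. t < inner d w)" for d t
    by (auto simp: B_def inner_commute)
  have "convex B" unfolding B_def by (intro convex_INT convex_halfspace_lt)
  have B_neg: "(0, t) \<in> B" if "t < 0" for t using that by (simp add: B_iff)
  have "x \<notin> B" if "x \<in> A" for x
  proof -
    obtain d t where x: "x = (d, t)" by (cases x)
    with dominated that obtain w where "w \<in> V" "inner d w \<le> t" by blast
    then show ?thesis unfolding x B_iff by (meson not_less)
  qed
  then have "A \<inter> B = {}" by blast
  moreover have "A \<noteq> {}" "B \<noteq> {}" using assms(2) B_neg[of "-1"] by auto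
  ultimately obtain a \<beta> where a: "a \<noteq> 0" "\<And>x. x \<in> A \<Longrightarrow> inner a x \<le> \<beta>" "\<And>x. x \<in> B \<Longrightarrow> \<beta> \<le> inner a x"
    using separating_hyperplane_sets[OF \<open>convex A\<close> \<open>convex B\<close>] by metis
  obtain a1 c where ac: "a = (a1, c)" by (cases a)
  have "0 \<le> \<beta>" using a(2)[OF assms(2)] by (simp add: ac)
  have c_t: "\<beta> \<le> c * t" if "t < 0" for t using a(3)[OF B_neg[OF that]] by (simp add: ac)
  have "\<beta> = 0"
  proof (rule ccontr)
    assume "\<beta> \<noteq> 0"
    with \<open>0 \<le> \<beta>\<close> c_t[of "-1"] have "c < 0" "0 < \<beta>" by auto
    with c_t[of "\<beta> / (2 * c)"] show False by (simp add: divide_pos_neg)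
  qed
  have "c < 0"
  proof (rule ccontr)
    assume "\<not> c < 0"
    with c_t[of "-1"] \<open>\<beta> = 0\<close> a(1) have "c = 0" "a1 \<noteq> 0" by (auto simp: ac zero_prod_def)
    obtain R where R: "\<And>w. w \<in> V \<Longrightarrow> norm w \<le> R"
      using compact_imp_bounded[OF V(2)] by (auto simp: bounded_iff)
    have bound: "inner a1 w \<le> norm a1 * R" if "w \<in> V" for w
      using norm_cauchy_schwarz[of a1 w] mult_left_mono[OF R[OF that] norm_ge_zero[of a1]] by simp
    have "(- a1, - norm a1 * R - 1) \<in> B"
      unfolding B_iff
    proof
      fix w assume "w \<in> V"
      with bound show "- norm a1 * R - 1 < inner (- a1) w" by fastforce
    qed
    from a(3)[OF this] \<open>c = 0\<close> \<open>\<beta> = 0\<close> have "inner a1 a1 \<le> 0" by (simp add: ac)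
    with \<open>a1 \<noteq> 0\<close> show False using inner_gt_zero_iff[of a1] by linarith
  qed
  define w0 where "w0 = (- 1 / c) *\<^sub>R a1"
  have inner_w0: "inner d w0 = - inner a (d, t) / c + t" for d t
    using \<open>c < 0\<close> by (simp add: w0_def ac inner_commute field_simps)
  have A_side: "inner d w0 \<le> t" if "(d, t) \<in> A" for d t
    using a(2)[OF that] \<open>\<beta> = 0\<close> \<open>c < 0\<close> by (simp add: inner_w0[of d t] divide_nonpos_neg)
  have "w0 \<in> V"
  proof (rule mem_closed_convex_if_lower_bounds[OF V(1) compact_imp_closed[OF V(2)]])
    fix d t assume "\<forall>w\<in>V. t < inner d w"
    then have "0 \<le> inner a (d, t)" using a(3) \<open>\<beta> = 0\<close> B_iff by blast
    then show "t \<le> inner d w0" using \<open>c < 0\<close> by (simp add: inner_w0[of d t] divide_nonneg_neg)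
  qed
  with A_side show ?thesis by blast
qed

lemma convex_Minkowski_sum:
  fixes V :: "'i::finite \<Rightarrow> 'a::real_vector set"
  assumes "\<And>i. convex (V i)"
  shows "convex {\<Sum>i\<in>UNIV. w i | w. \<forall>i. w i \<in> V i}"
proof (rule convexI)
  fix x y and a b :: real
  assume "x \<in> {\<Sum>i\<in>UNIV. w i | w. \<forall>i. w i \<in> V i}" "y \<in> {\<Sum>i\<in>UNIV. w i | w. \<forall>i. w i \<in> V i}"
    and ab: "0 \<le> a" "0 \<le> b" "a + b = 1"
  then obtain w1 w2 where w: "x = (\<Sum>i\<in>UNIV. w1 i)" "y = (\<Sum>i\<in>UNIV. w2 i)" "\<And>i. w1 i \<in> V i" "\<And>i. w2 i \<in> V i"
    by blast
  have "a *\<^sub>R x + b *\<^sub>R y = (\<Sum>i\<in>UNIV. a *\<^sub>R w1 i + b *\<^sub>R w2 i)"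
    by (simp add: w scaleR_sum_right sum.distrib)
  moreover have "a *\<^sub>R w1 i + b *\<^sub>R w2 i \<in> V i" for i
    using assms[of i] w(3,4) ab by (simp add: convexD)
  ultimately show "a *\<^sub>R x + b *\<^sub>R y \<in> {\<Sum>i\<in>UNIV. w i | w. \<forall>i. w i \<in> V i}" by blast
qed

lemma maximizer_of_separable_sum_iff:
  fixes f :: "'i::finite \<Rightarrow> 'a \<Rightarrow> real"
  assumes "\<forall>i. z i \<in> X i"
  shows "(\<forall>z'. (\<forall>i. z' i \<in> X i) \<longrightarrow> (\<Sum>i\<in>UNIV. f i (z' i)) \<le> (\<Sum>i\<in>UNIV. f i (z i)))
     \<longleftrightarrow> (\<forall>i. \<forall>y\<in>X i. f i y \<le> f i (z i))"
proof
  assume max: "\<forall>z'. (\<forall>i. z' i \<in> X i) \<longrightarrow> (\<Sum>i\<in>UNIV. f i (z' i)) \<le> (\<Sum>i\<in>UNIV. f i (z i))"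
  show "\<forall>i. \<forall>y\<in>X i. f i y \<le> f i (z i)"
  proof (intro allI ballI)
    fix i y assume "y \<in> X i"
    have split: "(\<Sum>j\<in>UNIV. f j (z' j)) = f i (z' i) + (\<Sum>j\<in>UNIV - {i}. f j (z j))"
      if "\<forall>j. j \<noteq> i \<longrightarrow> z' j = z j" for z'
      using that by (simp add: sum.remove[of UNIV i])
    from max[rule_format, of "z(i := y)"] \<open>y \<in> X i\<close> assms
      split[of "z(i := y)"] split[of z]
    show "f i y \<le> f i (z i)" by auto
  qed
qed (auto intro: sum_mono)

lemma convex_epigraph_pconj: "convex {(lam, t). pconj u lam \<le> ereal t}"
proof -
  have epi: "{(lam, t). pconj u lam \<le> ereal t} = (\<Inter>v. {(lam, t). ereal (dotp lam v) + u v \<le> ereal t})"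
    by (auto simp: pconj_def SUP_le_iff)
  have "convex {(lam, t). ereal (dotp lam v) + u v \<le> ereal t}" for v
  proof (cases "u v")
    case (real c)
    then have "{(lam, t). ereal (dotp lam v) + u v \<le> ereal t} = {x. inner (v, -1) x \<le> - c}"
      by (auto simp: dotp_def inner_commute)
    then show ?thesis by (simp add: convex_halfspace_le)
  qed auto
  then show ?thesis unfolding epi by (simp add: convex_INT)
qed

lemma INF_conj_minus_inner_at_subgradient:
  fixes p :: "real ^ 'k::finite \<Rightarrow> ereal"
  assumes "p lam0 = ereal P"
    and subgradient: "\<And>lam. ereal (P + dotp (lam - lam0) w) \<le> p lam"
  shows "(INF lam. p lam - ereal (dotp lam w)) = ereal (P - dotp lam0 w)"
proof (rule antisym)
  show "(INF lam. p lam - ereal (dotp lam w)) \<le> ereal (P - dotp lam0 w)"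
    by (rule INF_lower2[of lam0]) (auto simp: assms(1))
  show "ereal (P - dotp lam0 w) \<le> (INF lam. p lam - ereal (dotp lam w))"
  proof (rule INF_greatest)
    fix lam
    from subgradient[of lam]
    show "ereal (P - dotp lam0 w) \<le> p lam - ereal (dotp lam w)"
      by (cases "p lam") (auto simp: dotp_def inner_diff_left)
  qed
qed

lemma continuous_on_fst_apply2 [continuous_intros]:
  "continuous_on S (\<lambda>z::('i \<Rightarrow> 'k \<Rightarrow> 'a::topological_space) \<times> 'b::topological_space. fst z i k)"
  by (intro continuous_on_product_then_coordinatewise[where f = "\<lambda>z. fst z i"]
      continuous_on_product_then_coordinatewise[where f = fst] continuous_on_fst continuous_on_id)

lemma continuous_on_snd_apply2 [continuous_intros]:
  "continuous_on S (\<lambda>z::'b::topological_space \<times> ('i \<Rightarrow> 'k \<Rightarrow> 'a::topological_space). snd z i k)"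
  by (intro continuous_on_product_then_coordinatewise[where f = "\<lambda>z. snd z i"]
      continuous_on_product_then_coordinatewise[where f = snd] continuous_on_snd continuous_on_id)

lemma mem_Sall_iff: "z \<in> Sall E bbar \<longleftrightarrow> (\<forall>i. (fst z i, snd z i) \<in> Sset E bbar i)"
  by (cases z) (simp add: Sall_def)

lemma closed_Sall: "closed (Sall E bbar)"
proof -
  have "Sall E bbar = {z. \<forall>i. (\<forall>k. k \<notin> Kset E i \<longrightarrow> fst z i k = 0 \<and> snd z i k = 0) \<and>
      (\<forall>k. k \<in> Kset E i \<longrightarrow> 0 \<le> snd z i k \<and> snd z i k \<le> bbar i \<and> 0 \<le> fst z i k) \<and>
      (\<Sum>k\<in>Kset E i. fst z i k) \<le> 1}"
    by (auto simp: mem_Sall_iff Sset_def)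
  also have "closed \<dots>"
    by (intro closed_Collect_all closed_Collect_conj closed_Collect_imp open_Collect_const
        closed_Collect_eq closed_Collect_le continuous_intros)
  finally show ?thesis .
qed

lemma compact_Sall: "compact (Sall (E :: ('i \<times> 'k::finite) set) bbar)"
proof -
  define box where "box c = Pi UNIV (\<lambda>i. Pi UNIV (\<lambda>k. if k \<in> Kset E i then {0..c i} else {0::real}))"
    for c :: "'i \<Rightarrow> real"
  have box: "compact (box c)" for c
    unfolding box_def by (intro compact_Pi_UNIV) auto
  have "Sall E bbar \<subseteq> box (\<lambda>_. 1) \<times> box bbar"
  proof clarify
    fix x b assume "(x, b) \<in> Sall E bbar"
    then have S: "(x i, b i) \<in> Sset E bbar i" for i by (simp add: Sall_def)
    have "x i k \<le> (\<Sum>k\<in>Kset E i. x i k)" if "k \<in> Kset E i" for i k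
      using S[of i] that by (intro member_le_sum) (auto simp: Sset_def)
    also have "\<dots> i \<le> 1" for i using S[of i] by (simp add: Sset_def)
    finally have "x i k \<le> 1" if "k \<in> Kset E i" for i k using that by blast
    with S show "x \<in> box (\<lambda>_. 1) \<and> b \<in> box bbar" by (auto simp: box_def Sset_def)
  qed
  with compact_Times[OF box box] closed_Sall show ?thesis by (rule compact_if_closed_subset)
qed

locale bid_allocation =
  fixes E :: "('i::finite \<times> 'k::finite) set" and s :: "'i \<Rightarrow> real"
    and r :: "'i \<Rightarrow> 'k \<Rightarrow> real" and bbar :: "'i \<Rightarrow> real"
    and rho beta :: "'i \<Rightarrow> real \<Rightarrow> real"
  assumes bbar_nonneg: "\<And>i. 0 \<le> bbar i"
    and rho_cont: "\<And>i. continuous_on {0..bbar i} (rho i)"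
    and beta_cont: "\<And>i. continuous_on {0..bbar i} (beta i)"
begin

abbreviation vsum :: "('i \<Rightarrow> 'k \<Rightarrow> real) \<times> ('i \<Rightarrow> 'k \<Rightarrow> real) \<Rightarrow> real ^ 'k" where
  "vsum z \<equiv> vtot E s r rho (fst z) (snd z)"

definition lagrangian :: "real ^ 'k \<Rightarrow> ('i \<Rightarrow> 'k \<Rightarrow> real) \<times> ('i \<Rightarrow> 'k \<Rightarrow> real) \<Rightarrow> real" where
  "lagrangian lam z = pi_obj E s r rho beta (fst z) (snd z) - dotp lam (vsum z)"

definition maximizers :: "real ^ 'k \<Rightarrow> (('i \<Rightarrow> 'k \<Rightarrow> real) \<times> ('i \<Rightarrow> 'k \<Rightarrow> real)) set" where
  "maximizers lam = {z \<in> Sall E bbar. \<forall>z'\<in>Sall E bbar. lagrangian lam z' \<le> lagrangian lam z}"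

lemma lagrangian_shift: "lagrangian (lam + t *\<^sub>R d) z = lagrangian lam z - t * dotp d (vsum z)"
  by (simp add: lagrangian_def dotp_def inner_add_left)

lemma lagrangian_separable:
  "lagrangian lam z = (\<Sum>i\<in>UNIV. psi_obj E s r rho beta i lam (fst z i, snd z i))"
proof -
  have E: "E = Sigma UNIV (Kset E)" by (auto simp: Kset_def)
  have "pi_obj E s r rho beta (fst z) (snd z)
      = (\<Sum>i\<in>UNIV. \<Sum>k\<in>Kset E i. hfun rho beta i (r i k) (snd z i k) * s i * fst z i k)"
    unfolding pi_obj_def by (subst E, subst sum.Sigma) auto
  moreover have "dotp lam (vi E s r rho i (x, b))
      = (\<Sum>k\<in>Kset E i. lam $ k * (r i k * s i * x k * rho i (b k)))" for i x b
  proof -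
    have "dotp lam (vi E s r rho i (x, b))
        = (\<Sum>k\<in>UNIV. if k \<in> Kset E i then lam $ k * (r i k * s i * x k * rho i (b k)) else 0)"
      unfolding dotp_def vi_def inner_vec_def by (auto intro!: sum.cong)
    then show ?thesis by (simp add: sum.If_cases)
  qed
  then have "dotp lam (vsum z)
      = (\<Sum>i\<in>UNIV. \<Sum>k\<in>Kset E i. lam $ k * (r i k * s i * fst z i k * rho i (snd z i k)))"
    by (simp add: vtot_def dotp_def inner_sum_right)
  ultimately show ?thesis
    unfolding lagrangian_def psi_obj_def hfun_def by (simp add: sum_subtractf[symmetric] algebra_simps)
qed

lemma continuous_on_Sall_bid:
  assumes "continuous_on {0..bbar i} g" and "k \<in> Kset E i"
  shows "continuous_on (Sall E bbar) (\<lambda>z. g (snd z i k))"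
  by (rule continuous_on_compose2[OF assms(1)])
    (use assms(2) in \<open>auto intro!: continuous_intros simp: mem_Sall_iff Sset_def\<close>)

lemma continuous_on_lagrangian: "continuous_on (Sall E bbar) (lagrangian lam)"
  unfolding lagrangian_separable[abs_def] psi_obj_def hfun_def fst_conv snd_conv
  by (auto intro!: continuous_intros continuous_on_Sall_bid rho_cont beta_cont)

lemma continuous_on_vsum: "continuous_on (Sall E bbar) vsum"
  unfolding vtot_def vi_def fst_conv snd_conv
proof (intro continuous_on_sum continuous_on_vec_lambda)
  fix i k
  show "continuous_on (Sall E bbar) (\<lambda>z. if k \<in> Kset E i then r i k * s i * fst z i k * rho i (snd z i k) else 0)"
    by (cases "k \<in> Kset E i") (auto intro!: continuous_intros continuous_on_Sall_bid rho_cont)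
qed

lemma maximizers_nonempty: "maximizers lam \<noteq> {}"
proof -
  have "(\<lambda>_ _. 0, \<lambda>_ _. 0) \<in> Sall E bbar" by (simp add: Sall_def Sset_def bbar_nonneg)
  then show ?thesis
    using continuous_attains_sup[OF compact_Sall _ continuous_on_lagrangian]
    by (fastforce simp: maximizers_def)
qed

lemma compact_maximizers: "compact (maximizers lam)"
proof -
  obtain z0 where z0: "z0 \<in> maximizers lam" using maximizers_nonempty by blast
  then have "maximizers lam = {z \<in> Sall E bbar. lagrangian lam z0 \<le> lagrangian lam z}"
    by (auto simp: maximizers_def intro: order_trans)
  also have "compact \<dots>"
    by (rule compact_if_closed_subset[OF compact_Sall continuous_on_closed_Collect_le
          [OF continuous_on_const continuous_on_lagrangian compact_imp_closed[OF compact_Sall]]]) auto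
  finally show ?thesis .
qed

lemma Qdual_eq:
  assumes "z \<in> maximizers lam"
  shows "Qdual E s r rho beta bbar u lam = ereal (lagrangian lam z) + pconj u lam"
proof -
  have "(SUP z'\<in>Sall E bbar. ereal (lagrangian lam z')) = ereal (lagrangian lam z)"
    using assms by (intro antisym SUP_least SUP_upper2[of z]) (auto simp: maximizers_def)
  then show ?thesis by (simp add: Qdual_def lagrangian_def)
qed

lemma maximizers_blockwise:
  "maximizers lam = {z. \<forall>i. (fst z i, snd z i) \<in> Sstar E s r rho beta bbar i lam}"
proof -
  let ?f = "\<lambda>i. psi_obj E s r rho beta i lam"
  have "z \<in> maximizers lam \<longleftrightarrow> (\<forall>i. (fst z i, snd z i) \<in> Sstar E s r rho beta bbar i lam)" for z
  proof (cases "z \<in> Sall E bbar")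
    case True
    have "(\<forall>z'\<in>Sall E bbar. lagrangian lam z' \<le> lagrangian lam z)
      \<longleftrightarrow> (\<forall>w. (\<forall>i. w i \<in> Sset E bbar i) \<longrightarrow> (\<Sum>i\<in>UNIV. ?f i (w i)) \<le> (\<Sum>i\<in>UNIV. ?f i (fst z i, snd z i)))"
    proof
      assume max: "\<forall>z'\<in>Sall E bbar. lagrangian lam z' \<le> lagrangian lam z"
      show "\<forall>w. (\<forall>i. w i \<in> Sset E bbar i) \<longrightarrow> (\<Sum>i\<in>UNIV. ?f i (w i)) \<le> (\<Sum>i\<in>UNIV. ?f i (fst z i, snd z i))"
      proof (intro allI impI)
        fix w assume "\<forall>i. w i \<in> Sset E bbar i"
        with max[rule_format, of "(\<lambda>i. fst (w i), \<lambda>i. snd (w i))"]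
        show "(\<Sum>i\<in>UNIV. ?f i (w i)) \<le> (\<Sum>i\<in>UNIV. ?f i (fst z i, snd z i))"
          by (simp add: mem_Sall_iff lagrangian_separable)
      qed
    qed (auto simp: mem_Sall_iff lagrangian_separable)
    also have "\<dots> \<longleftrightarrow> (\<forall>i. \<forall>y\<in>Sset E bbar i. ?f i y \<le> ?f i (fst z i, snd z i))"
      by (rule maximizer_of_separable_sum_iff) (use True in \<open>simp add: mem_Sall_iff\<close>)
    finally show ?thesis
      using True by (auto simp: maximizers_def Sstar_def mem_Sall_iff)
  qed (auto simp: maximizers_def Sstar_def mem_Sall_iff)
  then show ?thesis by blast
qed

lemma convex_vsum_maximizers:
  assumes "\<And>i. convex (vi E s r rho i ` Sstar E s r rho beta bbar i lam)"
  shows "convex (vsum ` maximizers lam)"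
proof -
  let ?V = "\<lambda>i. vi E s r rho i ` Sstar E s r rho beta bbar i lam"
  have "vsum ` maximizers lam = {\<Sum>i\<in>UNIV. w i | w. \<forall>i. w i \<in> ?V i}"
  proof (intro equalityI subsetI)
    fix y assume "y \<in> vsum ` maximizers lam"
    then show "y \<in> {\<Sum>i\<in>UNIV. w i | w. \<forall>i. w i \<in> ?V i}"
      by (fastforce simp: maximizers_blockwise vtot_def)
  next
    fix y assume "y \<in> {\<Sum>i\<in>UNIV. w i | w. \<forall>i. w i \<in> ?V i}"
    then obtain w where y: "y = (\<Sum>i\<in>UNIV. w i)" and "\<forall>i. \<exists>x. x \<in> Sstar E s r rho beta bbar i lam \<and> w i = vi E s r rho i x"
      by blast
    from choice[OF this(2)] obtain g
      where g: "\<forall>i. g i \<in> Sstar E s r rho beta bbar i lam \<and> w i = vi E s r rho i (g i)" by blast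
    show "y \<in> vsum ` maximizers lam"
      by (rule image_eqI[of _ _ "(\<lambda>i. fst (g i), \<lambda>i. snd (g i))"]) (use g y in \<open>simp_all add: maximizers_blockwise vtot_def\<close>)
  qed
  then show ?thesis using convex_Minkowski_sum[OF assms] by simp
qed

lemma compact_vsum_maximizers: "compact (vsum ` maximizers lam)"
  by (intro compact_continuous_image continuous_on_subset[OF continuous_on_vsum] compact_maximizers)
    (auto simp: maximizers_def)

lemma maximizer_with_inner_le:
  assumes z0: "z0 \<in> maximizers lam"
    and perturbed: "\<And>t. 0 < t \<Longrightarrow> t \<le> 1 \<Longrightarrow>
      \<exists>z\<in>Sall E bbar. lagrangian lam z0 - t * T \<le> lagrangian (lam + t *\<^sub>R d) z"
  shows "\<exists>z\<in>maximizers lam. dotp d (vsum z) \<le> T"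
proof -
  have "\<exists>z\<in>Sall E bbar. lagrangian lam z = lagrangian lam z0 \<and> dotp d (vsum z) \<le> T"
  proof (rule maximizer_with_bounded_direction[OF compact_Sall continuous_on_lagrangian])
    show "continuous_on (Sall E bbar) (\<lambda>z. dotp d (vsum z))"
      unfolding dotp_def by (intro continuous_intros continuous_on_vsum)
    show "lagrangian lam z \<le> lagrangian lam z0" if "z \<in> Sall E bbar" for z
      using z0 that by (simp add: maximizers_def)
    show "\<exists>z\<in>Sall E bbar. lagrangian lam z0 - t * T \<le> lagrangian lam z - t * dotp d (vsum z)"
      if "0 < t" "t \<le> 1" for t
      using perturbed[OF that] by (simp add: lagrangian_shift)
  qed
  then obtain z where z: "z \<in> Sall E bbar" "lagrangian lam z = lagrangian lam z0" "dotp d (vsum z) \<le> T"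
    by blast
  with z0 have "z \<in> maximizers lam" by (simp add: maximizers_def)
  with z(3) show ?thesis by blast
qed

text \<open>Convexity of \<open>p\<close> spreads the bound \<open>p(\<lambda>\<^sup>* + d) \<le> p(\<lambda>\<^sup>*) + t\<close> over the segment
\<open>\<lambda>\<^sup>* + \<tau> d\<close>, \<open>0 < \<tau> \<le> 1\<close>, which is the form Danskin's argument needs.\<close>

lemma dual_minimizer_maximizer_inner_le:
  assumes lam_min: "\<And>lam. Qdual E s r rho beta bbar u lamstar \<le> Qdual E s r rho beta bbar u lam"
    and P: "pconj u lamstar = ereal P"
    and bound: "pconj u (lamstar + d) \<le> ereal (P + t)"
  shows "\<exists>z\<in>maximizers lamstar. dotp d (vsum z) \<le> t"
proof -
  obtain z0 where z0: "z0 \<in> maximizers lamstar" using maximizers_nonempty by blast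
  show ?thesis
  proof (rule maximizer_with_inner_le[OF z0])
    fix \<tau> :: real assume \<tau>: "0 < \<tau>" "\<tau> \<le> 1"
    have "(1 - \<tau>) *\<^sub>R (lamstar, P) + \<tau> *\<^sub>R (lamstar + d, P + t) \<in> {(lam, t). pconj u lam \<le> ereal t}"
      using \<tau> P bound by (intro convexD[OF convex_epigraph_pconj]) auto
    then have segment: "pconj u (lamstar + \<tau> *\<^sub>R d) \<le> ereal (P + \<tau> * t)"
      by (simp add: algebra_simps)
    obtain z where z: "z \<in> maximizers (lamstar + \<tau> *\<^sub>R d)" using maximizers_nonempty by blast
    have "ereal (lagrangian lamstar z0) + ereal P
        \<le> ereal (lagrangian (lamstar + \<tau> *\<^sub>R d) z) + pconj u (lamstar + \<tau> *\<^sub>R d)"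
      using lam_min[of "lamstar + \<tau> *\<^sub>R d"] by (simp add: Qdual_eq[OF z0] Qdual_eq[OF z] P)
    also have "\<dots> \<le> ereal (lagrangian (lamstar + \<tau> *\<^sub>R d) z) + ereal (P + \<tau> * t)"
      using segment by (rule add_left_mono)
    finally have "lagrangian lamstar z0 - \<tau> * t \<le> lagrangian (lamstar + \<tau> *\<^sub>R d) z" by simp
    moreover have "z \<in> Sall E bbar" using z by (simp add: maximizers_def)
    ultimately show "\<exists>z\<in>Sall E bbar. lagrangian lamstar z0 - \<tau> * t \<le> lagrangian (lamstar + \<tau> *\<^sub>R d) z"
      by blast
  qed
qed

lemma pconj_subgradient_at_dual_minimizer:
  assumes lam_min: "\<And>lam. Qdual E s r rho beta bbar u lamstar \<le> Qdual E s r rho beta bbar u lam"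
    and P: "pconj u lamstar = ereal P"
    and V_convex: "\<And>i. convex (vi E s r rho i ` Sstar E s r rho beta bbar i lamstar)"
  shows "\<exists>z\<in>maximizers lamstar. \<forall>lam. ereal (P + dotp (lam - lamstar) (vsum z)) \<le> pconj u lam"
proof -
  define A where "A = {(d, t). pconj u (lamstar + d) \<le> ereal (P + t)}"
  have "A = (\<lambda>x. x - (lamstar, P)) ` {(lam, t). pconj u lam \<le> ereal t}"
  proof (intro equalityI subsetI)
    fix x assume "x \<in> A"
    then show "x \<in> (\<lambda>x. x - (lamstar, P)) ` {(lam, t). pconj u lam \<le> ereal t}"
      by (intro image_eqI[of _ _ "x + (lamstar, P)"]) (auto simp: A_def add.commute)
  qed (auto simp: A_def)
  then have "convex A" by (simp add: convex_translation_subtract convex_epigraph_pconj)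
  have "(0, 0) \<in> A" by (simp add: A_def P)
  have dominated: "\<exists>w\<in>vsum ` maximizers lamstar. inner d w \<le> t" if "(d, t) \<in> A" for d t
    using dual_minimizer_maximizer_inner_le[OF lam_min P, of d t] that by (auto simp: A_def dotp_def)
  have "vsum ` maximizers lamstar \<noteq> {}" using maximizers_nonempty by blast
  from common_dominating_point[OF \<open>convex A\<close> \<open>(0, 0) \<in> A\<close> convex_vsum_maximizers[OF V_convex]
      compact_vsum_maximizers this dominated]
  obtain w where w: "w \<in> vsum ` maximizers lamstar"
    and w_dom: "\<And>d t. (d, t) \<in> A \<Longrightarrow> inner d w \<le> t" by blast
  have "ereal (P + dotp (lam - lamstar) w) \<le> pconj u lam" for lam
  proof (cases "pconj u lam")
    case (real q)
    then have "(lam - lamstar, q - P) \<in> A" by (simp add: A_def)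
    from w_dom[OF this] show ?thesis using real by (simp add: dotp_def)
  next
    case MInf
    then have "(lam - lamstar, dotp (lam - lamstar) w - 1) \<in> A" by (simp add: A_def)
    from w_dom[OF this] show ?thesis by (simp add: dotp_def)
  qed simp
  then show ?thesis using w by auto
qed

end

theorem mainTheorem6:
  fixes E :: "('i::finite \<times> 'k::finite) set"
    and s :: "'i \<Rightarrow> real" and r :: "'i \<Rightarrow> 'k \<Rightarrow> real" and bbar :: "'i \<Rightarrow> real"
    and rho beta :: "'i \<Rightarrow> real \<Rightarrow> real"
    and u :: "real ^ 'k \<Rightarrow> ereal"
    and lamstar :: "real ^ 'k"
  assumes s_pos: "\<And>i. s i > 0"
    and r_nonneg: "\<And>i k. (i, k) \<in> E \<Longrightarrow> r i k \<ge> 0"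
    and bbar_pos: "\<And>i. bbar i > 0"
    and rho_range: "\<And>i b. b \<in> {0..bbar i} \<Longrightarrow> rho i b \<in> {0..1}"
    and beta_mono: "\<And>i. mono_on {0..bbar i} (beta i)"
    and beta_le: "\<And>i b. b \<in> {0..bbar i} \<Longrightarrow> beta i b \<le> b"
    and rho_cont: "\<And>i. continuous_on {0..bbar i} (rho i)"
    and beta_cont: "\<And>i. continuous_on {0..bbar i} (beta i)"
    and u_concave: "concave_ext u"
    and lam_min: "\<And>lam. Qdual E s r rho beta bbar u lamstar \<le> Qdual E s r rho beta bbar u lam"
    and Q_finite: "\<bar>Qdual E s r rho beta bbar u lamstar\<bar> \<noteq> \<infinity>"
    and V_convex: "\<And>i. convex (vi E s r rho i ` Sstar E s r rho beta bbar i lamstar)"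
  shows "\<exists>x b. (x, b) \<in> Sall E bbar
              \<and> (\<forall>i. (x i, b i) \<in> Sstar E s r rho beta bbar i lamstar)
              \<and> Fprimal E s r rho beta u x b = Qdual E s r rho beta bbar u lamstar"
proof -
  interpret bid_allocation E s r bbar rho beta
    using bbar_pos rho_cont beta_cont by unfold_locales (auto intro: less_imp_le)
  obtain z0 where z0: "z0 \<in> maximizers lamstar" using maximizers_nonempty by blast
  obtain P where P: "pconj u lamstar = ereal P"
    using Q_finite unfolding Qdual_eq[OF z0] by (cases "pconj u lamstar") auto
  obtain z where z: "z \<in> maximizers lamstar"
    and subgradient: "\<And>lam. ereal (P + dotp (lam - lamstar) (vsum z)) \<le> pconj u lam"
    using pconj_subgradient_at_dual_minimizer[OF lam_min P V_convex] by blast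
  have "Fprimal E s r rho beta u (fst z) (snd z) = ereal (lagrangian lamstar z) + ereal P"
    unfolding Fprimal_def INF_conj_minus_inner_at_subgradient[OF P subgradient]
    by (simp add: lagrangian_def)
  also have "\<dots> = Qdual E s r rho beta bbar u lamstar"
    by (simp add: Qdual_eq[OF z] P)
  finally show ?thesis
    using z maximizers_blockwise[of lamstar] by (intro exI[of _ "fst z"] exI[of _ "snd z"]) (auto simp: maximizers_def)
qed

end
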